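(* Let $M^{\circ}=\langle \mathcal{S},\mathcal{A},s_{\text{init}},H,T^{\circ},R^{\circ}\rangle$ be a deterministic episodic MDP (abstract simulator) and let $\eta\in[0,1]$ be a perturbation level. Then the abstract policy $\rho$ returned by the Robust Dynamic Programming procedure $\mathrm{RDP}(M^{\circ},\eta)$ is a robust abstract policy, i.e. \[ \min_{M\in\mathcal{P}(M^{\circ},\eta)} V^{\rho}_{M}=\max_{\psi\in\Psi}\ \min_{M\in\mathcal{P}(M^{\circ},\eta)} V^{\psi}_{M}, \] so that $\rho\in\arg\max_{\psi\in\Psi}\min_{M\in\mathcal{P}(M^{\circ},\eta)}V^{\psi}_{M}$.
   Context: An episodic MDP $M=\langle\mathcal{S},\mathcal{A},s_{\text{init}},H,T,R\rangle$ has finite state space $\mathcal{S}$, finite action space $\mathcal{A}$, fixed initial state $s_{\text{init}}$, horizon $H$, transitions $T_h(\cdot\mid s,a)\in\Delta(\mathcal{S})$ and rewards $R_h(s,a)\in[0,1]$ for $h\in[H]$. It is deterministic if $T_h(s'\mid s,a)\in\{0,1\}$ for all $h,s,a,s'$. An abstract policy is a map $\psi:[H]\times\mathcal{S}\to\mathcal{A}$; $\Psi$ is the set of all such maps; $V^{\psi}_M=\mathbb{E}_{M,\psi}[r_1+\dots+r_H]$ with $s_1=s_{\text{init}}$, $a_h=\psi_h(s_h)$, $r_h=R_h(s_h,a_h)$, $s_{h+1}\sim T_h(\cdot\mid s_h,a_h)$. $\eta$-perturbation: an MDP $M'=\langle\mathcal{S},\mathcal{A},s_{\text{init}},H,T',R'\rangle$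 is an $\eta$-perturbation of $M=\langle\mathcal{S},\mathcal{A},s_{\text{init}},H,T,R\rangle$ if there is $\xi:[H]\times\mathcal{S}\times\mathcal{A}\to\Delta(\mathcal{A})$ with $\xi_h(a\mid s,a)\ge 1-\eta$ for all $h,s,a$ such that $T'_h(s'\mid s,a)=\sum_{a'}T_h(s'\mid s,a')\xi_h(a'\mid s,a)$ and $R'_h(s,a)=\sum_{a'}R_h(s,a')\xi_h(a'\mid s,a)$ for all $h,s,a,s'$. $\mathcal{P}(M,\eta)$ denotes the set of all $\eta$-perturbations of $M$. $\mathrm{RDP}(M^{\circ},\eta)$: set $\tilde V_{H+1}(s)=0$ for all $s$; for $h=H,\dots,1$ set $\tilde Q_h(s,a)=R^{\circ}_h(s,a)+\sum_{s'}T^{\circ}_h(s'\mid s,a)\tilde V_{h+1}(s')$ for all $s,a$ and $\tilde V_h(s)=(1-\eta)\max_a\tilde Q_h(s,a)+\eta\min_a\tilde Q_h(s,a)$ for all $s$; return $\rho$ with $\rho_h(s)\in\arg\max_a\tilde Q_h(s,a)$. *)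

theory Defs
  imports Complex_Main
begin

text \<open>Steps are h = 1..H. T h s a s' is the probability T_h(s' | s, a),
  R h s a is the reward R_h(s,a).\<close>

type_synonym ('s,'a) trans = "nat \<Rightarrow> 's \<Rightarrow> 'a \<Rightarrow> 's \<Rightarrow> real"
type_synonym ('s,'a) rew = "nat \<Rightarrow> 's \<Rightarrow> 'a \<Rightarrow> real"
type_synonym ('s,'a) policy = "nat \<Rightarrow> 's \<Rightarrow> 'a"

definition valid_mdp :: "nat \<Rightarrow> ('s::finite,'a::finite) trans \<Rightarrow> ('s,'a) rew \<Rightarrow> bool" where
  "valid_mdp H T R \<longleftrightarrow>
     (\<forall>h\<in>{1..H}. \<forall>s a. (\<forall>s'. T h s a s' \<ge> 0) \<and> (\<Sum>s'\<in>UNIV. T h s a s') = 1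
        \<and> 0 \<le> R h s a \<and> R h s a \<le> 1)"

definition deterministic_mdp :: "nat \<Rightarrow> ('s::finite,'a::finite) trans \<Rightarrow> bool" where
  "deterministic_mdp H T \<longleftrightarrow> (\<forall>h\<in>{1..H}. \<forall>s a s'. T h s a s' \<in> {0, 1})"

fun state_dist :: "('s::finite,'a) trans \<Rightarrow> 's \<Rightarrow> ('s,'a) policy \<Rightarrow> nat \<Rightarrow> 's \<Rightarrow> real" where
  "state_dist T s0 psi 0 s = 0"
| "state_dist T s0 psi (Suc 0) s = (if s = s0 then 1 else 0)"
| "state_dist T s0 psi (Suc (Suc h)) s' =
     (\<Sum>s\<in>UNIV. state_dist T s0 psi (Suc h) s * T (Suc h) s (psi (Suc h) s) s')"

definition value_fun :: "nat \<Rightarrow> 's \<Rightarrow> ('s::finite,'a) trans \<Rightarrow> ('s,'a) rew \<Rightarrow> ('s,'a) policy \<Rightarrow> real" where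
  "value_fun H s0 T R psi = (\<Sum>h=1..H. \<Sum>s\<in>UNIV. state_dist T s0 psi h s * R h s (psi h s))"

definition perturbations :: "nat \<Rightarrow> ('s::finite,'a::finite) trans \<Rightarrow> ('s,'a) rew \<Rightarrow> real
     \<Rightarrow> (('s,'a) trans \<times> ('s,'a) rew) set" where
  "perturbations H T R \<eta> = {(T', R'). \<exists>xi :: nat \<Rightarrow> 's \<Rightarrow> 'a \<Rightarrow> 'a \<Rightarrow> real.
      (\<forall>h\<in>{1..H}. \<forall>s a. (\<forall>a'. xi h s a a' \<ge> 0) \<and> (\<Sum>a'\<in>UNIV. xi h s a a') = 1
                         \<and> xi h s a a \<ge> 1 - \<eta>) \<and>
      (\<forall>h\<in>{1..H}. \<forall>s a s'. T' h s a s' = (\<Sum>a'\<in>UNIV. T h s a' s' * xi h s a a')) \<and>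
      (\<forall>h\<in>{1..H}. \<forall>s a. R' h s a = (\<Sum>a'\<in>UNIV. R h s a' * xi h s a a'))}"

text \<open>Robust dynamic programming. rdp_V T R \<eta> k s is tilde V_{H+1-k}(s) for a problem of
  horizon H (k = number of remaining steps); rdp_Q is the corresponding tilde Q.\<close>

primrec rdp_Vk :: "nat \<Rightarrow> ('s::finite,'a::finite) trans \<Rightarrow> ('s,'a) rew \<Rightarrow> real \<Rightarrow> nat \<Rightarrow> 's \<Rightarrow> real" where
  "rdp_Vk H T R \<eta> 0 s = 0"
| "rdp_Vk H T R \<eta> (Suc k) s =
     (let Q = (\<lambda>a. R (H - k) s a + (\<Sum>s'\<in>UNIV. T (H - k) s a s' * rdp_Vk H T R \<eta> k s'))
      in (1 - \<eta>) * Max (range Q) + \<eta> * Min (range Q))"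

definition rdp_V :: "nat \<Rightarrow> ('s::finite,'a::finite) trans \<Rightarrow> ('s,'a) rew \<Rightarrow> real \<Rightarrow> nat \<Rightarrow> 's \<Rightarrow> real" where
  "rdp_V H T R \<eta> h s = rdp_Vk H T R \<eta> (H + 1 - h) s"

definition rdp_Q :: "nat \<Rightarrow> ('s::finite,'a::finite) trans \<Rightarrow> ('s,'a) rew \<Rightarrow> real \<Rightarrow> nat \<Rightarrow> 's \<Rightarrow> 'a \<Rightarrow> real" where
  "rdp_Q H T R \<eta> h s a = R h s a + (\<Sum>s'\<in>UNIV. T h s a s' * rdp_V H T R \<eta> (h + 1) s')"

text \<open>rho is a possible output of RDP(M, eta): greedy w.r.t. tilde Q at every step
  (any tie-breaking).\<close>

definition rdp_output :: "nat \<Rightarrow> ('s::finite,'a::finite) trans \<Rightarrow> ('s,'a) rew \<Rightarrow> real \<Rightarrow> ('s,'a) policy \<Rightarrow> bool" where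
  "rdp_output H T R \<eta> rho \<longleftrightarrow>
     (\<forall>h\<in>{1..H}. \<forall>s. \<forall>a. rdp_Q H T R \<eta> h s a \<le> rdp_Q H T R \<eta> h s (rho h s))"

end

theory Submission
  imports Defs
begin

text \<open>Write \<open>V\<close> for the RDP value. For any policy and any perturbation, the value telescopes into
  \<open>V 1 s_init\<close> plus the expected Bellman residuals of \<open>V\<close> along the perturbed trajectory. A
  perturbation keeps the chosen action with weight at least \<open>1 - \<eta>\<close>, so one step of lookahead
  through it is a mixture of the \<open>Q\<close>-values putting weight \<open>\<ge> 1 - \<eta>\<close> on the chosen action; for
  the greedy \<open>\<rho>\<close> this mixture is at least \<open>(1 - \<eta>) max Q + \<eta> min Q = V\<close>, so all residuals
  are nonnegative and \<open>\<rho>\<close> earns at least \<open>V 1 s_init\<close> against every perturbation. Conversely,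
  the perturbation that diverts weight \<open>\<eta>\<close> to a \<open>Q\<close>-minimising action makes every residual
  of every policy nonpositive, so no policy guarantees more than \<open>V 1 s_init\<close>.\<close>

definition bellman_residual ::
    "('s::finite,'a) trans \<Rightarrow> ('s,'a) rew \<Rightarrow> (nat \<Rightarrow> 's \<Rightarrow> real) \<Rightarrow> ('s,'a) policy \<Rightarrow> nat \<Rightarrow> 's \<Rightarrow> real"
  where "bellman_residual T R U psi h s =
    R h s (psi h s) + (\<Sum>s'\<in>UNIV. T h s (psi h s) s' * U (Suc h) s') - U h s"

lemma sum_state_dist_Suc_Suc_mult:
  "(\<Sum>s'\<in>UNIV. state_dist T s0 psi (Suc (Suc h)) s' * U s')
   = (\<Sum>s\<in>UNIV. state_dist T s0 psi (Suc h) s * (\<Sum>s'\<in>UNIV. T (Suc h) s (psi (Suc h) s) s' * U s'))"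
proof -
  have "(\<Sum>s'\<in>UNIV. state_dist T s0 psi (Suc (Suc h)) s' * U s')
      = (\<Sum>s'\<in>UNIV. \<Sum>s\<in>UNIV. state_dist T s0 psi (Suc h) s * T (Suc h) s (psi (Suc h) s) s' * U s')"
    by (simp add: sum_distrib_right)
  also have "\<dots> = (\<Sum>s\<in>UNIV. \<Sum>s'\<in>UNIV. state_dist T s0 psi (Suc h) s * T (Suc h) s (psi (Suc h) s) s' * U s')"
    by (rule sum.swap)
  finally show ?thesis
    by (simp add: sum_distrib_left mult.assoc)
qed

lemma sum_expected_rewards_telescope:
  "(\<Sum>h=1..n. \<Sum>s\<in>UNIV. state_dist T s0 psi h s * R h s (psi h s))
   = U 1 s0 - (\<Sum>s\<in>UNIV. state_dist T s0 psi (Suc n) s * U (Suc n) s)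
     + (\<Sum>h=1..n. \<Sum>s\<in>UNIV. state_dist T s0 psi h s * bellman_residual T R U psi h s)"
proof (induction n)
  case 0
  have "state_dist T s0 psi (Suc 0) s * U (Suc 0) s = (if s = s0 then U 1 s else 0)" for s
    by simp
  then have "(\<Sum>s\<in>UNIV. state_dist T s0 psi (Suc 0) s * U (Suc 0) s) = U 1 s0"
    by simp
  then show ?case by simp
next
  case (Suc n)
  let ?d = "state_dist T s0 psi (Suc n)"
  have "(\<Sum>s\<in>UNIV. ?d s * bellman_residual T R U psi (Suc n) s)
      = (\<Sum>s\<in>UNIV. ?d s * R (Suc n) s (psi (Suc n) s))
        + (\<Sum>s\<in>UNIV. state_dist T s0 psi (Suc (Suc n)) s * U (Suc (Suc n)) s)
        - (\<Sum>s\<in>UNIV. ?d s * U (Suc n) s)"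
    unfolding bellman_residual_def sum_state_dist_Suc_Suc_mult
    by (simp add: algebra_simps sum.distrib sum_subtractf)
  then show ?case
    using Suc by simp
qed

lemma value_fun_telescope:
  assumes "\<And>s. U (Suc H) s = 0"
  shows "value_fun H s0 T R psi
    = U 1 s0 + (\<Sum>h=1..H. \<Sum>s\<in>UNIV. state_dist T s0 psi h s * bellman_residual T R U psi h s)"
  unfolding value_fun_def sum_expected_rewards_telescope[where U = U] by (simp add: assms)

lemma state_dist_nonneg:
  assumes "valid_mdp H T R" "h \<le> H"
  shows "0 \<le> state_dist T s0 psi h s"
  using assms
proof (induction T s0 psi h s rule: state_dist.induct)
  case (3 T s0 psi h s')
  have "Suc h \<in> {1..H}"
    using "3.prems"(2) by simp
  then have "0 \<le> T (Suc h) s (psi (Suc h) s) s'" for s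
    using "3.prems"(1) unfolding valid_mdp_def by blast
  with "3.IH" "3.prems" show ?case
    by (auto intro!: sum_nonneg)
qed auto

lemma value_fun_nonneg:
  assumes "valid_mdp H T R"
  shows "0 \<le> value_fun H s0 T R psi"
  unfolding value_fun_def
  using assms state_dist_nonneg[OF assms] unfolding valid_mdp_def
  by (auto intro!: sum_nonneg)

lemma value_fun_ge_if_residual_nonneg:
  assumes "valid_mdp H T R" "\<And>s. U (Suc H) s = 0"
    and "\<And>h s. h \<in> {1..H} \<Longrightarrow> 0 \<le> bellman_residual T R U psi h s"
  shows "U 1 s0 \<le> value_fun H s0 T R psi"
  unfolding value_fun_telescope[of U, OF assms(2)]
  using state_dist_nonneg[OF assms(1)] assms(3)
  by (auto intro!: sum_nonneg)

lemma value_fun_le_if_residual_nonpos: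
  assumes "valid_mdp H T R" "\<And>s. U (Suc H) s = 0"
    and "\<And>h s. h \<in> {1..H} \<Longrightarrow> bellman_residual T R U psi h s \<le> 0"
  shows "value_fun H s0 T R psi \<le> U 1 s0"
  unfolding value_fun_telescope[of U, OF assms(2)]
  using state_dist_nonneg[OF assms(1)] assms(3)
  by (auto intro!: sum_nonpos mult_nonneg_nonpos)

lemma perturbationsE:
  assumes "(T', R') \<in> perturbations H T R \<eta>"
  obtains xi :: "nat \<Rightarrow> 's::finite \<Rightarrow> 'a::finite \<Rightarrow> 'a \<Rightarrow> real" where
    "\<And>h s a a'. h \<in> {1..H} \<Longrightarrow> 0 \<le> xi h s a a'"
    "\<And>h s a. h \<in> {1..H} \<Longrightarrow> (\<Sum>a'\<in>UNIV. xi h s a a') = 1"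
    "\<And>h s a. h \<in> {1..H} \<Longrightarrow> 1 - \<eta> \<le> xi h s a a"
    "\<And>h s a s'. h \<in> {1..H} \<Longrightarrow> T' h s a s' = (\<Sum>a'\<in>UNIV. T h s a' s' * xi h s a a')"
    "\<And>h s a. h \<in> {1..H} \<Longrightarrow> R' h s a = (\<Sum>a'\<in>UNIV. R h s a' * xi h s a a')"
proof -
  from assms obtain xi where
    "\<forall>h\<in>{1..H}. \<forall>s a. (\<forall>a'. xi h s a a' \<ge> 0) \<and> (\<Sum>a'\<in>UNIV. xi h s a a') = 1
                         \<and> xi h s a a \<ge> 1 - \<eta>"
    "\<forall>h\<in>{1..H}. \<forall>s a s'. T' h s a s' = (\<Sum>a'\<in>UNIV. T h s a' s' * xi h s a a')"
    "\<forall>h\<in>{1..H}. \<forall>s a. R' h s a = (\<Sum>a'\<in>UNIV. R h s a' * xi h s a a')"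
    unfolding perturbations_def by blast
  then show thesis
    by (intro that[of xi]) auto
qed

lemma perturbationsI:
  fixes xi :: "nat \<Rightarrow> 's::finite \<Rightarrow> 'a::finite \<Rightarrow> 'a \<Rightarrow> real"
  assumes "\<And>h s a a'. 0 \<le> xi h s a a'" "\<And>h s a. (\<Sum>a'\<in>UNIV. xi h s a a') = 1"
    and "\<And>h s a. 1 - \<eta> \<le> xi h s a a"
  shows "(\<lambda>h s a s'. \<Sum>a'\<in>UNIV. T h s a' s' * xi h s a a',
          \<lambda>h s a. \<Sum>a'\<in>UNIV. R h s a' * xi h s a a') \<in> perturbations H T R \<eta>"
  unfolding perturbations_def using assms by (auto intro!: exI[of _ xi])

lemma perturbation_valid_mdp:
  assumes "valid_mdp H T R" "(T', R') \<in> perturbations H T R \<eta>"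
  shows "valid_mdp H T' R'"
proof -
  obtain xi where xi_nonneg: "\<And>h s a a'. h \<in> {1..H} \<Longrightarrow> 0 \<le> xi h s a a'"
    and xi_sum: "\<And>h s a. h \<in> {1..H} \<Longrightarrow> (\<Sum>a'\<in>UNIV. xi h s a a') = 1"
    and "\<And>h s a. h \<in> {1..H} \<Longrightarrow> 1 - \<eta> \<le> xi h s a a"
    and T': "\<And>h s a s'. h \<in> {1..H} \<Longrightarrow> T' h s a s' = (\<Sum>a'\<in>UNIV. T h s a' s' * xi h s a a')"
    and R': "\<And>h s a. h \<in> {1..H} \<Longrightarrow> R' h s a = (\<Sum>a'\<in>UNIV. R h s a' * xi h s a a')"
    using assms(2) by (rule perturbationsE) blast
  have T_stoch: "\<And>s'. 0 \<le> T h s a s'" "(\<Sum>s'\<in>UNIV. T h s a s') = 1" "0 \<le> R h s a" "R h s a \<le> 1"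
    if "h \<in> {1..H}" for h s a
    using assms(1) that unfolding valid_mdp_def by auto
  have T'_nonneg: "0 \<le> T' h s a s'" and R'_nonneg: "0 \<le> R' h s a" if h: "h \<in> {1..H}" for h s a s'
    using h by (simp_all add: T' R' T_stoch xi_nonneg sum_nonneg)
  have T'_sum: "(\<Sum>s'\<in>UNIV. T' h s a s') = 1" if h: "h \<in> {1..H}" for h s a
  proof -
    have "(\<Sum>s'\<in>UNIV. T' h s a s') = (\<Sum>s'\<in>UNIV. \<Sum>a'\<in>UNIV. T h s a' s' * xi h s a a')"
      using h by (simp add: T')
    also have "\<dots> = (\<Sum>a'\<in>UNIV. (\<Sum>s'\<in>UNIV. T h s a' s') * xi h s a a')"
      by (subst sum.swap) (simp add: sum_distrib_right)
    also have "\<dots> = 1"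
      using h by (simp add: T_stoch xi_sum)
    finally show ?thesis .
  qed
  have R'_le_1: "R' h s a \<le> 1" if h: "h \<in> {1..H}" for h s a
  proof -
    have "R' h s a \<le> (\<Sum>a'\<in>UNIV. 1 * xi h s a a')"
      unfolding R'[OF h] using h by (intro sum_mono mult_right_mono) (simp_all add: T_stoch xi_nonneg)
    then show ?thesis
      using h by (simp add: xi_sum)
  qed
  show ?thesis
    unfolding valid_mdp_def using T'_nonneg R'_nonneg T'_sum R'_le_1 by blast
qed

lemma sum_mult_ge_Max_Min:
  fixes xi Q :: "'a::finite \<Rightarrow> real"
  assumes "\<And>a'. 0 \<le> xi a'" "sum xi UNIV = 1" "1 - \<eta> \<le> xi a" "\<And>c. Q c \<le> Q a"
  shows "(1 - \<eta>) * Max (range Q) + \<eta> * Min (range Q) \<le> (\<Sum>a'\<in>UNIV. Q a' * xi a')"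
proof -
  define m where "m = Min (range Q)"
  have Max_eq: "Max (range Q) = Q a"
    using assms(4) by (intro Max_eqI) auto
  have m_le: "m \<le> Q c" for c
    unfolding m_def by (intro Min_le) auto
  have "(Q a - m) * (1 - \<eta>) + m \<le> (Q a - m) * xi a + m"
    using m_le[of a] assms(3) by (simp add: mult_left_mono)
  also have "(Q a - m) * xi a \<le> (\<Sum>a'\<in>UNIV. (Q a' - m) * xi a')"
    by (rule member_le_sum) (use m_le assms(1) in auto)
  also have "(\<Sum>a'\<in>UNIV. (Q a' - m) * xi a') = (\<Sum>a'\<in>UNIV. Q a' * xi a') - m"
    using assms(2) by (simp add: algebra_simps sum_subtractf sum_distrib_left[symmetric])
  finally show ?thesis
    unfolding Max_eq m_def[symmetric] by (simp add: algebra_simps)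
qed

definition divert_kernel :: "real \<Rightarrow> 'a \<Rightarrow> 'a \<Rightarrow> 'a \<Rightarrow> real" where
  "divert_kernel \<eta> b a a' = (1 - \<eta>) * of_bool (a' = a) + \<eta> * of_bool (a' = b)"

lemma sum_mult_divert_kernel:
  "(\<Sum>a'\<in>(UNIV::'a::finite set). f a' * divert_kernel \<eta> b a a') = (1 - \<eta>) * f a + \<eta> * f b"
proof -
  have "f a' * divert_kernel \<eta> b a a'
      = (1 - \<eta>) * (if a' = a then f a else 0) + \<eta> * (if a' = b then f b else 0)" for a'
    by (simp add: divert_kernel_def algebra_simps)
  then show ?thesis
    by (simp add: sum.distrib sum_distrib_left[symmetric])
qed

lemma divert_perturbation:
  fixes w :: "nat \<Rightarrow> 's::finite \<Rightarrow> 'a::finite"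
  assumes "0 \<le> \<eta>" "\<eta> \<le> 1"
  shows "(\<lambda>h s a s'. \<Sum>a'\<in>UNIV. T h s a' s' * divert_kernel \<eta> (w h s) a a',
          \<lambda>h s a. \<Sum>a'\<in>UNIV. R h s a' * divert_kernel \<eta> (w h s) a a') \<in> perturbations H T R \<eta>"
proof (rule perturbationsI)
  show "(\<Sum>a'\<in>UNIV. divert_kernel \<eta> (w h s) a a') = 1" for h s a
    using sum_mult_divert_kernel[of "\<lambda>_. 1"] by simp
qed (use assms in \<open>auto simp: divert_kernel_def\<close>)

lemma rdp_V_Suc_horizon: "rdp_V H T R \<eta> (Suc H) s = 0"
  by (simp add: rdp_V_def)

lemma rdp_V_eq_Max_Min:
  assumes "h \<in> {1..H}"
  shows "rdp_V H T R \<eta> h s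
    = (1 - \<eta>) * Max (range (rdp_Q H T R \<eta> h s)) + \<eta> * Min (range (rdp_Q H T R \<eta> h s))"
proof -
  have "H + 1 - h = Suc (H - h)" "H - (H - h) = h" "H + 1 - (h + 1) = H - h"
    using assms by auto
  then show ?thesis
    unfolding rdp_V_def rdp_Q_def by (simp add: Let_def)
qed

lemma lookahead_rdp_V_perturbed:
  fixes T :: "('s::finite,'a::finite) trans"
  assumes "\<And>s'. T' h s a s' = (\<Sum>a'\<in>UNIV. T h s a' s' * xi a')"
    and "R' h s a = (\<Sum>a'\<in>UNIV. R h s a' * xi a')"
  shows "R' h s a + (\<Sum>s'\<in>UNIV. T' h s a s' * rdp_V H T R \<eta> (Suc h) s')
    = (\<Sum>a'\<in>UNIV. rdp_Q H T R \<eta> h s a' * xi a')"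
proof -
  let ?V = "rdp_V H T R \<eta> (Suc h)"
  have "(\<Sum>s'\<in>UNIV. T' h s a s' * ?V s') = (\<Sum>s'\<in>UNIV. \<Sum>a'\<in>UNIV. T h s a' s' * xi a' * ?V s')"
    by (simp add: assms(1) sum_distrib_right)
  also have "\<dots> = (\<Sum>a'\<in>UNIV. \<Sum>s'\<in>UNIV. T h s a' s' * xi a' * ?V s')"
    by (rule sum.swap)
  also have "\<dots> = (\<Sum>a'\<in>UNIV. (\<Sum>s'\<in>UNIV. T h s a' s' * ?V s') * xi a')"
    unfolding sum_distrib_right by (simp add: mult_ac)
  finally show ?thesis
    by (simp add: assms(2) rdp_Q_def distrib_right sum.distrib)
qed

lemma rdp_output_value_ge:
  assumes "valid_mdp H T R" "rdp_output H T R \<eta> rho" "(T', R') \<in> perturbations H T R \<eta>"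
  shows "rdp_V H T R \<eta> 1 s0 \<le> value_fun H s0 T' R' rho"
proof -
  obtain xi where xi: "\<And>h s a a'. h \<in> {1..H} \<Longrightarrow> 0 \<le> xi h s a a'"
    "\<And>h s a. h \<in> {1..H} \<Longrightarrow> (\<Sum>a'\<in>UNIV. xi h s a a') = 1"
    "\<And>h s a. h \<in> {1..H} \<Longrightarrow> 1 - \<eta> \<le> xi h s a a"
    and T': "\<And>h s a s'. h \<in> {1..H} \<Longrightarrow> T' h s a s' = (\<Sum>a'\<in>UNIV. T h s a' s' * xi h s a a')"
    and R': "\<And>h s a. h \<in> {1..H} \<Longrightarrow> R' h s a = (\<Sum>a'\<in>UNIV. R h s a' * xi h s a a')"
    using assms(3) by (rule perturbationsE) blast
  have residual_nonneg: "0 \<le> bellman_residual T' R' (rdp_V H T R \<eta>) rho h s"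
    if h: "h \<in> {1..H}" for h s
  proof -
    have "rdp_V H T R \<eta> h s \<le> (\<Sum>a'\<in>UNIV. rdp_Q H T R \<eta> h s a' * xi h s (rho h s) a')"
      unfolding rdp_V_eq_Max_Min[OF h]
      by (rule sum_mult_ge_Max_Min[where a = "rho h s"])
        (use xi h assms(2) in \<open>auto simp: rdp_output_def\<close>)
    also have "\<dots> = R' h s (rho h s) + (\<Sum>s'\<in>UNIV. T' h s (rho h s) s' * rdp_V H T R \<eta> (Suc h) s')"
      by (rule lookahead_rdp_V_perturbed[symmetric]) (use T' R' h in auto)
    finally show ?thesis
      by (simp add: bellman_residual_def)
  qed
  show ?thesis
    using perturbation_valid_mdp[OF assms(1,3)] rdp_V_Suc_horizon residual_nonneg
    by (rule value_fun_ge_if_residual_nonneg[where U = "rdp_V H T R \<eta>"])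
qed

lemma worst_perturbation_value_le:
  assumes "valid_mdp H T R" "0 \<le> \<eta>" "\<eta> \<le> 1"
  obtains T0 R0 where "(T0, R0) \<in> perturbations H T R \<eta>"
    and "\<And>psi. value_fun H s0 T0 R0 psi \<le> rdp_V H T R \<eta> 1 s0"
proof -
  define w where "w h s = arg_min_on (rdp_Q H T R \<eta> h s) UNIV" for h s
  have Q_w: "rdp_Q H T R \<eta> h s (w h s) = Min (range (rdp_Q H T R \<eta> h s))" for h s
    unfolding w_def by (rule Min_eqI[symmetric]) (auto intro: arg_min_least)
  define T0 where "T0 h s a s' = (\<Sum>a'\<in>UNIV. T h s a' s' * divert_kernel \<eta> (w h s) a a')" for h s a s'
  define R0 where "R0 h s a = (\<Sum>a'\<in>UNIV. R h s a' * divert_kernel \<eta> (w h s) a a')" for h s a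
  have pert: "(T0, R0) \<in> perturbations H T R \<eta>"
    unfolding T0_def[abs_def] R0_def[abs_def] using assms(2,3) by (rule divert_perturbation)
  have residual_nonpos: "bellman_residual T0 R0 (rdp_V H T R \<eta>) psi h s \<le> 0"
    if h: "h \<in> {1..H}" for psi h s
  proof -
    let ?Q = "rdp_Q H T R \<eta> h s"
    have "R0 h s (psi h s) + (\<Sum>s'\<in>UNIV. T0 h s (psi h s) s' * rdp_V H T R \<eta> (Suc h) s')
        = (\<Sum>a'\<in>UNIV. ?Q a' * divert_kernel \<eta> (w h s) (psi h s) a')"
      by (rule lookahead_rdp_V_perturbed) (simp_all add: T0_def R0_def)
    also have "\<dots> = (1 - \<eta>) * ?Q (psi h s) + \<eta> * Min (range ?Q)"
      by (simp add: sum_mult_divert_kernel Q_w)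
    also have "\<dots> \<le> rdp_V H T R \<eta> h s"
      unfolding rdp_V_eq_Max_Min[OF h] using assms(3) by (auto intro!: mult_left_mono Max_ge)
    finally show ?thesis
      by (simp add: bellman_residual_def)
  qed
  have "value_fun H s0 T0 R0 psi \<le> rdp_V H T R \<eta> 1 s0" for psi
    using perturbation_valid_mdp[OF assms(1) pert] rdp_V_Suc_horizon residual_nonpos
    by (rule value_fun_le_if_residual_nonpos[where U = "rdp_V H T R \<eta>"])
  with pert show thesis
    by (rule that)
qed

lemma INF_eq_SUP_INF_if_saddle:
  fixes f :: "'p \<Rightarrow> 'm \<Rightarrow> real"
  assumes "z \<in> P" "\<And>y. bdd_below (f y ` P)"
    and "\<And>m. m \<in> P \<Longrightarrow> c \<le> f x m" and "\<And>y. f y z \<le> c"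
  shows "(INF m\<in>P. f x m) = (SUP y. INF m\<in>P. f y m)"
proof -
  have INF_le: "(INF m\<in>P. f y m) \<le> c" for y
    using assms(2,1,4) by (rule cINF_lower2)
  have "c \<le> (INF m\<in>P. f x m)"
    using assms(1,3) by (auto intro: cINF_greatest)
  moreover have "(INF m\<in>P. f x m) \<le> (SUP y. INF m\<in>P. f y m)"
    using INF_le by (auto intro!: cSUP_upper bdd_aboveI2)
  moreover have "(SUP y. INF m\<in>P. f y m) \<le> c"
    using INF_le by (auto intro: cSUP_least)
  ultimately show ?thesis by linarith
qed

theorem theorem1:
  fixes H :: nat and s_init :: "'s::finite"
    and T :: "('s, 'a::finite) trans" and R :: "('s, 'a) rew"
    and \<eta> :: real and rho :: "('s, 'a) policy"
  assumes "valid_mdp H T R"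
    and "deterministic_mdp H T"
    and "0 \<le> \<eta>" and "\<eta> \<le> 1"
    and "rdp_output H T R \<eta> rho"
  shows "(INF M\<in>perturbations H T R \<eta>. value_fun H s_init (fst M) (snd M) rho)
         = (SUP psi. INF M\<in>perturbations H T R \<eta>. value_fun H s_init (fst M) (snd M) psi)"
proof -
  obtain T0 R0 where worst: "(T0, R0) \<in> perturbations H T R \<eta>"
    "\<And>psi. value_fun H s_init T0 R0 psi \<le> rdp_V H T R \<eta> 1 s_init"
    using worst_perturbation_value_le[OF assms(1,3,4)] by blast
  have "0 \<le> value_fun H s_init (fst M) (snd M) psi" if "M \<in> perturbations H T R \<eta>" for psi M
    using that value_fun_nonneg perturbation_valid_mdp[OF assms(1)] by (metis prod.collapse)
  then have "bdd_below ((\<lambda>M. value_fun H s_init (fst M) (snd M) psi) ` perturbations H T R \<eta>)"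
    for psi by (rule bdd_belowI2)
  moreover have "\<And>M. M \<in> perturbations H T R \<eta> \<Longrightarrow>
      rdp_V H T R \<eta> 1 s_init \<le> value_fun H s_init (fst M) (snd M) rho"
    using rdp_output_value_ge[OF assms(1,5)] by (metis prod.collapse)
  ultimately show ?thesis
    using worst by (intro INF_eq_SUP_INF_if_saddle[where z = "(T0, R0)"]) auto
qed

end
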